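(* In the setting of the context, the Cauchy problem \[ \partial_tu_k(x,t)+a(x)\cdot\nabla u_k(x,t)=\mathcal{J}u_k(x,t)\ \ (x\in\Sigma,\ t>0),\qquad u_k(x,0)=x_k\ \ (x\in\Sigma),\qquad k=1,\dots,D, \] has a unique global mild solution $u\in\mathcal{C}(\Sigma\times[0,+\infty);\mathbb{R}^D)$.
   Context: $D\ge1$, $\Sigma=\{x=(x_1,\dots,x_D)\in\mathbb{R}^D: x_k\ge0,\ \sum_{k=1}^Dx_k\le1\}$, and for $x\in\Sigma$ set $x_0=1-\sum_{k=1}^Dx_k$. Let $f_0,\dots,f_D:\Sigma\to[0,\infty)$ be Lipschitz continuous, $\bar f(x)=\sum_{k=0}^Dx_kf_k(x)$, $a=(a_1,\dots,a_D)$ with $a_k(x)=-(f_k(x)-\bar f(x))x_k$. Constants $\lambda_{ij}>0$, $\gamma_{ij}\in(0,1]$ are given for $i\ne j$ in $\{0,\dots,D\}$, and for continuous $\phi:\Sigma\to\mathbb{R}$ \[ \mathcal{J}\phi(x)=\sum_{\substack{i,j=1\\ i\neq j}}^D\lambda_{ij}f_i(x)[\phi(x+\gamma_{ij}x_i(e_j-e_i))-\phi(x)]+\sum_{i=1}^D\lambda_{i0}f_i(x)[\phi(x-\gamma_{i0}x_ie_i)-\phi(x)]+\sum_{j=1}^D\lambda_{0j}f_0(x)[\phi(x+\gamma_{0j}x_0e_j)-\phi(x)], \] $e_j$ the standard unit vectors of $\mathbb{R}^D$. Let $Y(x,t)$ denote the solution at time $t\in\mathbb{R}$ of $\dot y=a(y)$,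 $y(0)=x$ (this flow maps $\Sigma$ into itself). A mild solution on $[0,T)$ is a function $u\in\mathcal{C}(\Sigma\times[0,T);\mathbb{R}^D)$ satisfying, for $k=1,\dots,D$, \[ u_k(x,t)=Y_k(x,-t)+\int_0^t\mathcal{J}u_k(Y(x,s-t),s)\,ds. \] *)

theory Defs
  imports "HOL-Analysis.Analysis"
begin

text \<open>Points of the Simplex live in real^'n with D = CARD('n) \<ge> 1.
  The index set {0,...,D} is represented by 'n option, with None standing for 0.
  The standard unit vector e_j is axis j 1.\<close>

definition Simplex :: "(real ^ 'n::finite) set" where
  "Simplex = {x. (\<forall>k. 0 \<le> x $ k) \<and> (\<Sum>k\<in>UNIV. x $ k) \<le> 1}"

definition coord0 :: "real ^ 'n::finite \<Rightarrow> real" where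
  "coord0 x = 1 - (\<Sum>k\<in>UNIV. x $ k)"

definition fbar :: "(real ^ 'n \<Rightarrow> real) \<Rightarrow> ('n \<Rightarrow> real ^ 'n \<Rightarrow> real) \<Rightarrow> real ^ 'n::finite \<Rightarrow> real" where
  "fbar f0 f x = coord0 x * f0 x + (\<Sum>k\<in>UNIV. x $ k * f k x)"

definition drift :: "(real ^ 'n \<Rightarrow> real) \<Rightarrow> ('n \<Rightarrow> real ^ 'n \<Rightarrow> real) \<Rightarrow> real ^ 'n::finite \<Rightarrow> real ^ 'n" where
  "drift f0 f x = (\<chi> k. - (f k x - fbar f0 f x) * x $ k)"

definition Jop :: "('n option \<Rightarrow> 'n option \<Rightarrow> real) \<Rightarrow> ('n option \<Rightarrow> 'n option \<Rightarrow> real)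
    \<Rightarrow> (real ^ 'n \<Rightarrow> real) \<Rightarrow> ('n \<Rightarrow> real ^ 'n \<Rightarrow> real)
    \<Rightarrow> (real ^ 'n \<Rightarrow> real) \<Rightarrow> real ^ 'n::finite \<Rightarrow> real" where
  "Jop lam gam f0 f \<phi> x =
     (\<Sum>i\<in>UNIV. \<Sum>j\<in>UNIV - {i}. lam (Some i) (Some j) * f i x *
        (\<phi> (x + (gam (Some i) (Some j) * x $ i) *\<^sub>R (axis j 1 - axis i 1)) - \<phi> x))
   + (\<Sum>i\<in>UNIV. lam (Some i) None * f i x *
        (\<phi> (x - (gam (Some i) None * x $ i) *\<^sub>R axis i 1) - \<phi> x))
   + (\<Sum>j\<in>UNIV. lam None (Some j) * f0 x *
        (\<phi> (x + (gam None (Some j) * coord0 x) *\<^sub>R axis j 1) - \<phi> x))"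

text \<open>Global mild solution on \<Sigma> \<times> [0,\<infinity>), given the flow Y (Y x t = solution at time t
  of y' = a(y), y(0) = x).\<close>

definition global_mild_solution ::
  "('n option \<Rightarrow> 'n option \<Rightarrow> real) \<Rightarrow> ('n option \<Rightarrow> 'n option \<Rightarrow> real)
    \<Rightarrow> (real ^ 'n \<Rightarrow> real) \<Rightarrow> ('n \<Rightarrow> real ^ 'n \<Rightarrow> real)
    \<Rightarrow> (real ^ 'n \<Rightarrow> real \<Rightarrow> real ^ 'n)
    \<Rightarrow> ((real ^ 'n) \<times> real \<Rightarrow> real ^ 'n::finite) \<Rightarrow> bool" where
  "global_mild_solution lam gam f0 f Y u \<longleftrightarrow>
     continuous_on (Simplex \<times> {0..}) u \<and>
     (\<forall>x\<in>Simplex. \<forall>t\<ge>0. \<forall>k.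
        u (x, t) $ k = Y x (- t) $ k +
          integral {0..t} (\<lambda>s. Jop lam gam f0 f (\<lambda>y. u (y, s) $ k) (Y x (s - t))))"

end

theory Submission
  imports Defs
begin

text \<open>The drift is Lipschitz on the compact simplex \<open>\<Sigma>\<close>, so by Gronwall the flow \<open>Y\<close> is
  Lipschitz in the initial point, locally uniformly in time, hence jointly continuous. Every jump
  of \<open>J\<close> stays in \<open>\<Sigma>\<close>, and \<open>\<bar>J\<phi>\<bar> \<le> K sup \<bar>\<phi>\<bar>\<close>. With \<open>\<beta> = 2K + 1\<close> the Duhamel term
  \<open>\<integral>\<^sub>0\<^sup>t Jh(Y(x, s - t), s) ds\<close> therefore turns a bound \<open>C e\<^sup>\<beta>\<^sup>s\<close> on \<open>h\<close> into the bound
  \<open>(C/2) e\<^sup>\<beta>\<^sup>t\<close>. Since \<open>J\<close> is linear, the components decouple; for each of them existence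
  follows from Banach's fixed point theorem in the \<open>e\<^sup>-\<^sup>\<beta>\<^sup>t\<close>-weighted sup norm, and uniqueness
  from the same estimate applied to the difference of two solutions on \<open>\<Sigma> \<times> [0, t]\<close>.\<close>

section \<open>Exponential bounds and integrals with a variable bound\<close>

lemma DERIV_le_linear_imp_exp_bound:
  fixes g g' :: "real \<Rightarrow> real"
  assumes t: "0 \<le> t"
    and g: "\<And>s. (g has_real_derivative g' s) (at s)"
    and g': "\<And>s. g' s \<le> c * g s"
  shows "g t \<le> exp (c * t) * g 0"
proof -
  have "exp (- c * t) * g t \<le> exp (- c * 0) * g 0"
  proof (rule DERIV_nonpos_imp_nonincreasing[OF t])
    fix s
    have "((\<lambda>s. exp (- c * s) * g s) has_real_derivative exp (- c * s) * (g' s - c * g s)) (at s)"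
      by (auto intro!: derivative_eq_intros g simp: algebra_simps)
    moreover have "exp (- c * s) * (g' s - c * g s) \<le> 0"
      using g'[of s] by (simp add: mult_nonneg_nonpos)
    ultimately show "\<exists>y. ((\<lambda>s. exp (- c * s) * g s) has_real_derivative y) (at s) \<and> y \<le> 0"
      by blast
  qed
  then show ?thesis
    by (simp add: exp_minus field_simps)
qed

lemma DERIV_abs_le_linear_imp_exp_bound:
  fixes g g' :: "real \<Rightarrow> real"
  assumes g: "\<And>s. (g has_real_derivative g' s) (at s)"
    and g': "\<And>s. \<bar>g' s\<bar> \<le> c * g s"
  shows "g t \<le> exp (c * \<bar>t\<bar>) * g 0"
proof (cases "0 \<le> t")
  case True
  then show ?thesis
    using DERIV_le_linear_imp_exp_bound[OF True g] g' abs_le_D1 by fastforce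
next
  case False
  have "((\<lambda>s. g (- s)) has_real_derivative - g' (- s)) (at s)" for s
    using DERIV_chain'[OF DERIV_minus[OF DERIV_ident] g] by (simp add: o_def)
  moreover have "- g' (- s) \<le> c * g (- s)" for s
    using g'[of "- s"] by linarith
  ultimately have "g (- (- t)) \<le> exp (c * - t) * g (- 0)"
    using False by (intro DERIV_le_linear_imp_exp_bound) auto
  then show ?thesis
    using False by simp
qed

lemma lipschitz_ode_solutions_dist_le:
  fixes y z :: "real \<Rightarrow> 'a::real_inner"
  assumes F: "L-lipschitz_on S F"
    and y: "\<And>t. y t \<in> S" "\<And>t. (y has_vector_derivative F (y t)) (at t)"
    and z: "\<And>t. z t \<in> S" "\<And>t. (z has_vector_derivative F (z t)) (at t)"
  shows "dist (y t) (z t) \<le> exp (L * \<bar>t\<bar>) * dist (y 0) (z 0)"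
proof -
  define d where "d t = y t - z t" for t
  define d' where "d' t = F (y t) - F (z t)" for t
  define g where "g t = d t \<bullet> d t" for t
  have "(d has_derivative (\<lambda>h. h *\<^sub>R d' s)) (at s)" for s
    using has_vector_derivative_diff[OF y(2) z(2), of s]
    unfolding d_def[abs_def] d'_def has_vector_derivative_def .
  from has_derivative_inner[OF this this]
  have "(g has_real_derivative 2 * (d s \<bullet> d' s)) (at s)" for s
    unfolding has_field_derivative_def g_def
    by (rule has_derivative_eq_rhs) (auto simp: fun_eq_iff inner_commute algebra_simps)
  moreover have "\<bar>2 * (d s \<bullet> d' s)\<bar> \<le> (2 * L) * g s" for s
  proof -
    have "\<bar>d s \<bullet> d' s\<bar> \<le> norm (d s) * norm (d' s)"
      by (rule Cauchy_Schwarz_ineq2)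
    also have "\<dots> \<le> norm (d s) * (L * norm (d s))"
      using lipschitz_onD[OF F y(1) z(1), of s s]
      by (intro mult_left_mono) (auto simp: d_def d'_def dist_norm)
    also have "\<dots> = L * g s"
      by (simp add: g_def power2_norm_eq_inner[symmetric] power2_eq_square)
    finally show ?thesis
      by (simp add: abs_mult)
  qed
  ultimately have "g t \<le> exp (2 * L * \<bar>t\<bar>) * g 0"
    by (rule DERIV_abs_le_linear_imp_exp_bound)
  also have "\<dots> = (exp (L * \<bar>t\<bar>) * norm (d 0))\<^sup>2"
    by (simp add: g_def power2_norm_eq_inner power_mult_distrib exp_double[symmetric] mult.assoc)
  finally have "(norm (d t))\<^sup>2 \<le> (exp (L * \<bar>t\<bar>) * norm (d 0))\<^sup>2"
    by (simp add: g_def power2_norm_eq_inner)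
  then show ?thesis
    by (auto simp: d_def dist_norm intro: power2_le_imp_le)
qed

lemma integral_abs_le_exp:
  fixes F :: "real \<Rightarrow> real"
  assumes F: "F integrable_on {0..t}" and t: "0 \<le> t" and \<beta>: "0 < \<beta>" and A: "0 \<le> A"
    and le: "\<And>s. s \<in> {0..t} \<Longrightarrow> \<bar>F s\<bar> \<le> A * exp (\<beta> * s)"
  shows "\<bar>integral {0..t} F\<bar> \<le> A / \<beta> * exp (\<beta> * t)"
proof -
  have exp_integral:
    "((\<lambda>s. A * exp (\<beta> * s)) has_integral (A / \<beta> * exp (\<beta> * t) - A / \<beta> * exp (\<beta> * 0))) {0..t}"
    using t \<beta> by (intro fundamental_theorem_of_calculus)
      (auto intro!: derivative_eq_intros simp: has_real_derivative_iff_has_vector_derivative[symmetric])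
  have "\<bar>integral {0..t} F\<bar> \<le> integral {0..t} (\<lambda>s. A * exp (\<beta> * s))"
    using integral_norm_bound_integral[OF F has_integral_integrable[OF exp_integral]] le by auto
  also have "\<dots> = A / \<beta> * exp (\<beta> * t) - A / \<beta>"
    using integral_unique[OF exp_integral] by simp
  also have "\<dots> \<le> A / \<beta> * exp (\<beta> * t)"
    using A \<beta> by simp
  finally show ?thesis .
qed

lemma integral_Icc0_rescale:
  fixes F :: "real \<Rightarrow> real"
  assumes "0 \<le> t"
  shows "integral {0..t} F = t * integral {0..1} (\<lambda>r. F (t * r))"
proof (cases "t = 0")
  case False
  with assms have t: "0 < t" by simp
  have "(\<lambda>r. r / t) ` {0..t} = {0..1}"
  proof
    show "{0..1} \<subseteq> (\<lambda>r. r / t) ` {0..t}"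
    proof
      fix y :: real assume "y \<in> {0..1}"
      then have "t * y \<in> {0..t}" "y = (t * y) / t"
        using t by (auto simp: mult_left_le_one_le)
      then show "y \<in> (\<lambda>r. r / t) ` {0..t}" by blast
    qed
  qed (use t in auto)
  with integral_stretch_real[of t 0 t F] t show ?thesis
    by simp
qed simp

text \<open>Rescaling \<open>s = t r\<close> moves the variable upper bound into the integrand, where
  continuity in parameters is standard.\<close>

lemma continuous_on_integral_Icc0:
  fixes F :: "'a::topological_space \<Rightarrow> real \<Rightarrow> real \<Rightarrow> real"
  assumes F: "continuous_on (A \<times> {0..} \<times> {0..}) (\<lambda>(x, t, s). F x t s)"
  shows "continuous_on (A \<times> {0..}) (\<lambda>(x, t). integral {0..t} (F x t))"
proof -
  let ?m = "\<lambda>z::('a \<times> real) \<times> real. (fst (fst z), snd (fst z), snd (fst z) * snd z)"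
  have "continuous_on ((A \<times> {0..}) \<times> cbox 0 1) ?m"
    by (intro continuous_on_Pair continuous_on_fst continuous_on_snd continuous_on_mult continuous_on_id)
  moreover have "?m ` ((A \<times> {0..}) \<times> cbox 0 1) \<subseteq> A \<times> {0..} \<times> {0..}"
    by auto
  ultimately have "continuous_on ((A \<times> {0..}) \<times> cbox 0 1) ((\<lambda>(x, t, s). F x t s) \<circ> ?m)"
    by (rule continuous_on_compose[OF _ continuous_on_subset[OF F]])
  then have "continuous_on ((A \<times> {0..}) \<times> cbox 0 1) (\<lambda>(xt, r). F (fst xt) (snd xt) (snd xt * r))"
    by (simp add: o_def case_prod_beta)
  from continuous_on_mult[OF continuous_on_snd[OF continuous_on_id] integral_continuous_on_param[OF this]]
  have "continuous_on (A \<times> {0..}) (\<lambda>xt. snd xt * integral {0..1} (\<lambda>r. F (fst xt) (snd xt) (snd xt * r)))"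
    by simp
  then show ?thesis
  proof (rule continuous_on_eq)
    fix xt :: "'a \<times> real" assume "xt \<in> A \<times> {0..}"
    then show "snd xt * integral {0..1} (\<lambda>r. F (fst xt) (snd xt) (snd xt * r))
        = (\<lambda>(x, t). integral {0..t} (F x t)) xt"
      using integral_Icc0_rescale[of "snd xt" "F (fst xt) (snd xt)"] by (auto simp: case_prod_beta)
  qed
qed

section \<open>Lipschitz functions\<close>

lemma lipschitz_on_sum:
  fixes p :: "'i \<Rightarrow> 'a::metric_space \<Rightarrow> 'b::real_normed_vector"
  assumes "finite I" "\<And>i. i \<in> I \<Longrightarrow> (L i)-lipschitz_on S (p i)"
  shows "(\<Sum>i\<in>I. L i)-lipschitz_on S (\<lambda>x. \<Sum>i\<in>I. p i x)"
  using assms by (induction I rule: finite_induct) (auto intro!: lipschitz_intros)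

lemma lipschitz_on_mult:
  fixes p q :: "'a::metric_space \<Rightarrow> real"
  assumes p: "L-lipschitz_on S p" "\<And>x. x \<in> S \<Longrightarrow> \<bar>p x\<bar> \<le> B"
    and q: "M-lipschitz_on S q" "\<And>x. x \<in> S \<Longrightarrow> \<bar>q x\<bar> \<le> C"
    and "0 \<le> B" "0 \<le> C"
  shows "(B * M + C * L)-lipschitz_on S (\<lambda>x. p x * q x)"
proof (rule lipschitz_onI)
  fix x y assume xy: "x \<in> S" "y \<in> S"
  have "dist (p x * q x) (p y * q y) = \<bar>p x * (q x - q y) + (p x - p y) * q y\<bar>"
    by (simp add: dist_real_def algebra_simps)
  also have "\<dots> \<le> \<bar>p x\<bar> * \<bar>q x - q y\<bar> + \<bar>p x - p y\<bar> * \<bar>q y\<bar>"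
    by (metis abs_mult abs_triangle_ineq)
  also have "\<dots> \<le> B * (M * dist x y) + (L * dist x y) * C"
    using xy p q assms(5,6) lipschitz_on_nonneg[OF p(1)] lipschitz_onD[OF p(1) xy] lipschitz_onD[OF q(1) xy]
    by (intro add_mono mult_mono) (auto simp: dist_real_def)
  finally show "dist (p x * q x) (p y * q y) \<le> (B * M + C * L) * dist x y"
    by (simp add: algebra_simps)
qed (use assms(5,6) lipschitz_on_nonneg[OF p(1)] lipschitz_on_nonneg[OF q(1)] in simp)

lemma lipschitz_on_mult_compact:
  fixes p q :: "'a::metric_space \<Rightarrow> real"
  assumes "compact S" "L-lipschitz_on S p" "M-lipschitz_on S q"
  shows "\<exists>K. K-lipschitz_on S (\<lambda>x. p x * q x)"
proof -
  have "bounded (p ` S)" "bounded (q ` S)"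
    using assms by (auto intro!: compact_imp_bounded compact_continuous_image lipschitz_on_continuous_on)
  then obtain B C where "\<And>x. x \<in> S \<Longrightarrow> \<bar>p x\<bar> \<le> B" "\<And>x. x \<in> S \<Longrightarrow> \<bar>q x\<bar> \<le> C" "0 \<le> B" "0 \<le> C"
    by (metis bounded_pos image_eqI less_imp_le real_norm_def)
  then show ?thesis
    using lipschitz_on_mult assms(2,3) by blast
qed

lemma lipschitz_on_vec_components:
  fixes F :: "'a::metric_space \<Rightarrow> real ^ 'n::finite"
  assumes "\<And>k. (L k)-lipschitz_on S (\<lambda>x. F x $ k)"
  shows "(\<Sum>k\<in>UNIV. L k)-lipschitz_on S F"
proof (rule lipschitz_onI)
  fix x y assume "x \<in> S" "y \<in> S"
  have "dist (F x) (F y) \<le> (\<Sum>k\<in>UNIV. \<bar>F x $ k - F y $ k\<bar>)"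
    using norm_le_l1_cart[of "F x - F y"] by (simp add: dist_norm)
  also have "\<dots> \<le> (\<Sum>k\<in>UNIV. L k * dist x y)"
    using lipschitz_onD[OF assms \<open>x \<in> S\<close> \<open>y \<in> S\<close>] by (intro sum_mono) (simp add: dist_real_def)
  finally show "dist (F x) (F y) \<le> (\<Sum>k\<in>UNIV. L k) * dist x y"
    by (simp add: sum_distrib_right)
qed (rule sum_nonneg, rule lipschitz_on_nonneg[OF assms])

lemma lipschitz_on_component: "1-lipschitz_on S (\<lambda>x::real^'n::finite. x $ k)"
  by (rule lipschitz_onI) (auto simp: dist_norm intro: order_trans[OF _ component_le_norm_cart])

section \<open>The simplex and the jump operator\<close>

lemma Simplex_nonneg: "x \<in> Simplex \<Longrightarrow> 0 \<le> x $ k"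
  by (simp add: Simplex_def)

lemma Simplex_sum_le_1: "x \<in> Simplex \<Longrightarrow> (\<Sum>k\<in>UNIV. x $ k) \<le> 1"
  by (simp add: Simplex_def)

lemma Simplex_component_le_1:
  assumes "x \<in> Simplex"
  shows "x $ k \<le> 1"
proof -
  have "x $ k \<le> (\<Sum>k\<in>UNIV. x $ k)"
    by (rule member_le_sum) (auto simp: Simplex_nonneg[OF assms])
  with Simplex_sum_le_1[OF assms] show ?thesis
    by simp
qed

lemma coord0_nonneg: "x \<in> Simplex \<Longrightarrow> 0 \<le> coord0 x"
  by (simp add: coord0_def Simplex_def)

lemma zero_in_Simplex: "0 \<in> Simplex"
  by (simp add: Simplex_def)

lemma compact_Simplex: "compact Simplex"
proof -
  have "closed {x::real^'n. (\<Sum>k\<in>UNIV. x $ k) \<le> 1}"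
    by (intro closed_Collect_le continuous_intros)
  moreover have "Simplex = {x::real^'n. \<forall>i. 0 \<le> x $ i} \<inter> {x. (\<Sum>k\<in>UNIV. x $ k) \<le> 1}"
    by (auto simp: Simplex_def)
  ultimately have "closed (Simplex :: (real^'n) set)"
    by (metis closed_Int closed_positive_orthant)
  moreover have "norm x \<le> 1" if "x \<in> Simplex" for x :: "real^'n"
    using norm_le_l1_cart[of x] Simplex_sum_le_1[OF that] Simplex_nonneg[OF that] by simp
  then have "bounded (Simplex :: (real^'n) set)"
    by (auto simp: bounded_iff)
  ultimately show ?thesis
    by (simp add: compact_eq_bounded_closed)
qed

lemma convex_Simplex: "convex Simplex"
  unfolding convex_def Simplex_def
proof (intro allI ballI impI, safe)
  fix x y :: "real^'n" and u v :: real and k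
  assume x: "\<forall>k. 0 \<le> x $ k" "(\<Sum>k\<in>UNIV. x $ k) \<le> 1" and y: "\<forall>k. 0 \<le> y $ k" "(\<Sum>k\<in>UNIV. y $ k) \<le> 1"
    and uv: "0 \<le> u" "0 \<le> v" "u + v = 1"
  show "0 \<le> (u *\<^sub>R x + v *\<^sub>R y) $ k"
    using x y uv by simp
  have "(\<Sum>k\<in>UNIV. (u *\<^sub>R x + v *\<^sub>R y) $ k) = u * (\<Sum>k\<in>UNIV. x $ k) + v * (\<Sum>k\<in>UNIV. y $ k)"
    by (simp add: sum.distrib sum_distrib_left)
  also have "\<dots> \<le> u + v"
    using x y uv by (intro add_mono mult_left_le) auto
  finally show "(\<Sum>k\<in>UNIV. (u *\<^sub>R x + v *\<^sub>R y) $ k) \<le> 1"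
    using uv by simp
qed

text \<open>Each jump of \<^const>\<open>Jop\<close> moves a fraction \<open>\<gamma> \<le> 1\<close> of the mass of one coordinate
  (possibly the implicit coordinate \<open>x\<^sub>0\<close>) to another one.\<close>

lemma Simplex_jump:
  assumes x: "x \<in> Simplex" and g: "0 \<le> g" "g \<le> 1" and ij: "i \<noteq> j"
  shows "x + (g * x $ i) *\<^sub>R (axis j 1 - axis i 1) \<in> Simplex"
proof -
  have "g * x $ i \<le> x $ i" "0 \<le> g * x $ i"
    using g Simplex_nonneg[OF x, of i] by (auto simp: mult_left_le_one_le)
  moreover have "(\<Sum>k\<in>UNIV. (x + (g * x $ i) *\<^sub>R (axis j 1 - axis i 1)) $ k) = (\<Sum>k\<in>UNIV. x $ k)"
    by (simp add: sum.distrib sum_subtractf sum_distrib_left[symmetric] axis_def)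
  ultimately show ?thesis
    using x ij by (auto simp: Simplex_def axis_def)
qed

lemma Simplex_jump_out:
  assumes x: "x \<in> Simplex" and g: "0 \<le> g" "g \<le> 1"
  shows "x - (g * x $ i) *\<^sub>R axis i 1 \<in> Simplex"
proof -
  have "g * x $ i \<le> x $ i" "0 \<le> g * x $ i"
    using g Simplex_nonneg[OF x, of i] by (auto simp: mult_left_le_one_le)
  moreover have "(\<Sum>k\<in>UNIV. (x - (g * x $ i) *\<^sub>R axis i 1) $ k) = (\<Sum>k\<in>UNIV. x $ k) - g * x $ i"
    by (simp add: sum_subtractf sum_distrib_left[symmetric] axis_def)
  ultimately show ?thesis
    using x by (auto simp: Simplex_def axis_def)
qed

lemma Simplex_jump_in:
  assumes x: "x \<in> Simplex" and g: "0 \<le> g" "g \<le> 1"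
  shows "x + (g * coord0 x) *\<^sub>R axis j 1 \<in> Simplex"
proof -
  have "g * coord0 x \<le> coord0 x" "0 \<le> g * coord0 x"
    using g coord0_nonneg[OF x] by (auto simp: mult_left_le_one_le)
  moreover have "(\<Sum>k\<in>UNIV. (x + (g * coord0 x) *\<^sub>R axis j 1) $ k) = (\<Sum>k\<in>UNIV. x $ k) + g * coord0 x"
    by (simp add: sum.distrib sum_distrib_left[symmetric] axis_def)
  ultimately show ?thesis
    using x by (auto simp: Simplex_def axis_def coord0_def)
qed

definition domain_retraction :: "(real ^ 'n::finite) \<times> real \<Rightarrow> (real ^ 'n) \<times> real" where
  "domain_retraction z = (closest_point Simplex (fst z), max 0 (snd z))"

lemma domain_retraction_in: "domain_retraction z \<in> Simplex \<times> {0..}"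
  using closest_point_in_set[OF compact_imp_closed[OF compact_Simplex]] zero_in_Simplex
  by (auto simp: domain_retraction_def)

lemma domain_retraction_id: "z \<in> Simplex \<times> {0..} \<Longrightarrow> domain_retraction z = z"
  by (auto simp: domain_retraction_def closest_point_self)

lemma continuous_on_domain_retraction: "continuous_on UNIV domain_retraction"
  unfolding domain_retraction_def using zero_in_Simplex
  by (intro continuous_intros continuous_on_compose2[OF continuous_on_closest_point[OF convex_Simplex
        compact_imp_closed[OF compact_Simplex]]]) auto

lemma Jop_diff:
  "Jop lam gam f0 f \<phi> y - Jop lam gam f0 f \<psi> y = Jop lam gam f0 f (\<lambda>z. \<phi> z - \<psi> z) y"
proof -
  have distrib: "l * c * ((a - d) - (b - e)) = l * c * (a - b) - l * c * (d - e)" for l c a b d e :: real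
    by (simp add: algebra_simps)
  show ?thesis
    unfolding Jop_def distrib sum_subtractf by linarith
qed

section \<open>The mild formulation\<close>

locale mild_problem =
  fixes f0 :: "real ^ 'n::finite \<Rightarrow> real"
    and f :: "'n \<Rightarrow> real ^ 'n \<Rightarrow> real"
    and lam gam :: "'n option \<Rightarrow> 'n option \<Rightarrow> real"
    and Y :: "real ^ 'n \<Rightarrow> real \<Rightarrow> real ^ 'n"
  assumes f0_lip: "\<exists>L. L-lipschitz_on Simplex f0"
    and f_lip: "\<And>k. \<exists>L. L-lipschitz_on Simplex (f k)"
    and gam_range: "\<And>i j. i \<noteq> j \<Longrightarrow> 0 < gam i j \<and> gam i j \<le> 1"
    and Y_init: "\<And>x. x \<in> Simplex \<Longrightarrow> Y x 0 = x"
    and Y_in: "\<And>x t. x \<in> Simplex \<Longrightarrow> Y x t \<in> Simplex"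
    and Y_ode: "\<And>x t. x \<in> Simplex \<Longrightarrow> (Y x has_vector_derivative drift f0 f (Y x t)) (at t)"
begin

abbreviation J :: "(real ^ 'n \<Rightarrow> real) \<Rightarrow> real ^ 'n \<Rightarrow> real" where
  "J \<equiv> Jop lam gam f0 f"

lemma f0_cont: "continuous_on Simplex f0"
  using f0_lip lipschitz_on_continuous_on by blast

lemma f_cont: "continuous_on Simplex (f k)"
  using f_lip lipschitz_on_continuous_on by blast

lemma lipschitz_on_drift: "\<exists>L. L-lipschitz_on Simplex (drift f0 f)"
proof -
  have add: "\<exists>L. L-lipschitz_on Simplex (\<lambda>x. p x + q x)"
    and diff: "\<exists>L. L-lipschitz_on Simplex (\<lambda>x. p x - q x)"
    and mult: "\<exists>L. L-lipschitz_on Simplex (\<lambda>x. p x * q x)"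
    if "\<exists>L. L-lipschitz_on Simplex p" "\<exists>L. L-lipschitz_on Simplex q" for p q :: "real^'n \<Rightarrow> real"
    using that lipschitz_on_add lipschitz_on_diff lipschitz_on_mult_compact[OF compact_Simplex] by blast+
  have sum: "\<exists>L. L-lipschitz_on Simplex (\<lambda>x. \<Sum>i\<in>UNIV. p i x)"
    if "\<And>i. \<exists>L. L-lipschitz_on Simplex (p i)" for p :: "'n \<Rightarrow> real^'n \<Rightarrow> real"
    using that lipschitz_on_sum[of UNIV _ Simplex p] by (metis finite)
  have comp: "\<exists>L. L-lipschitz_on Simplex (\<lambda>x::real^'n. x $ k)" for k
    using lipschitz_on_component by blast
  obtain L where "L-lipschitz_on Simplex (\<lambda>x::real^'n. \<Sum>k\<in>UNIV. x $ k)"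
    using sum[of "\<lambda>k x. x $ k", OF comp] by blast
  from lipschitz_on_diff[OF lipschitz_on_constant[where c = 1] this]
  have "\<exists>L. L-lipschitz_on Simplex (coord0 :: real^'n \<Rightarrow> real)"
    unfolding coord0_def[abs_def] by (rule exI)
  then have "\<exists>L. L-lipschitz_on Simplex (fbar f0 f)"
    unfolding fbar_def[abs_def] using add mult sum comp f0_lip f_lip by presburger
  then have "\<exists>L. L-lipschitz_on Simplex (\<lambda>x. drift f0 f x $ k)" for k
    unfolding drift_def using mult diff f_lip comp by simp
  then obtain L where "\<And>k. (L k)-lipschitz_on Simplex (\<lambda>x. drift f0 f x $ k)"
    by metis
  then show ?thesis
    using lipschitz_on_vec_components by blast
qed

lemma continuous_on_flow: "continuous_on (Simplex \<times> UNIV) (\<lambda>(x, t). Y x t)"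
proof -
  obtain L where L: "L-lipschitz_on Simplex (drift f0 f)"
    using lipschitz_on_drift by blast
  have flow_lip: "(exp (L * c))-lipschitz_on Simplex (\<lambda>x. Y x s)" if "\<bar>s\<bar> \<le> c" for s c
  proof (rule lipschitz_onI)
    fix x y :: "real^'n" assume "x \<in> Simplex" "y \<in> Simplex"
    then have "dist (Y x s) (Y y s) \<le> exp (L * \<bar>s\<bar>) * dist x y"
      using lipschitz_ode_solutions_dist_le[OF L, of "Y x" "Y y" s] Y_in Y_ode Y_init by simp
    also have "\<dots> \<le> exp (L * c) * dist x y"
      by (intro mult_right_mono) (simp_all add: mult_left_mono[OF that lipschitz_on_nonneg[OF L]])
    finally show "dist (Y x s) (Y y s) \<le> exp (L * c) * dist x y" .
  qed simp
  have "local_lipschitz UNIV Simplex (\<lambda>t x. Y x t)"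
  proof (rule local_lipschitzI)
    fix t :: real and x :: "real^'n"
    show "\<exists>u>0. \<exists>L. \<forall>s\<in>cball t u \<inter> UNIV. L-lipschitz_on (cball x u \<inter> Simplex) (\<lambda>x. Y x s)"
      by (intro exI[of _ 1] exI[of _ "exp (L * (\<bar>t\<bar> + 1))"] conjI ballI lipschitz_on_subset[OF flow_lip])
        (auto simp: dist_real_def)
  qed
  moreover have "continuous_on UNIV (Y x)" if "x \<in> Simplex" for x
    using Y_ode[OF that] by (intro continuous_at_imp_continuous_on ballI has_vector_derivative_continuous)
  ultimately have "continuous_on (UNIV \<times> Simplex) (\<lambda>(t, x). Y x t)"
    by (rule continuous_on_TimesI)
  then show ?thesis
    by (rule continuous_on_swap_args)
qed

definition rate_bound :: real where
  "rate_bound = (SUP x\<in>Simplex. \<bar>f0 x\<bar> + (\<Sum>i\<in>UNIV. \<bar>f i x\<bar>))"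

lemma rate_le_rate_bound:
  assumes "x \<in> Simplex"
  shows "\<bar>f0 x\<bar> \<le> rate_bound" "\<bar>f i x\<bar> \<le> rate_bound"
proof -
  have "continuous_on Simplex (\<lambda>x. \<bar>f0 x\<bar> + (\<Sum>i\<in>UNIV. \<bar>f i x\<bar>))"
    by (intro continuous_intros f0_cont f_cont)
  then have "bdd_above ((\<lambda>x. \<bar>f0 x\<bar> + (\<Sum>i\<in>UNIV. \<bar>f i x\<bar>)) ` Simplex)"
    by (intro bounded_imp_bdd_above compact_imp_bounded compact_continuous_image compact_Simplex)
  then have "\<bar>f0 x\<bar> + (\<Sum>i\<in>UNIV. \<bar>f i x\<bar>) \<le> rate_bound"
    unfolding rate_bound_def using assms by (rule cSUP_upper2) simp
  moreover have "\<bar>f i x\<bar> \<le> (\<Sum>i\<in>UNIV. \<bar>f i x\<bar>)"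
    by (rule member_le_sum) auto
  ultimately show "\<bar>f0 x\<bar> \<le> rate_bound" "\<bar>f i x\<bar> \<le> rate_bound"
    by (auto intro: order_trans[OF _ sum_nonneg])
qed

lemma rate_bound_nonneg: "0 \<le> rate_bound"
  using rate_le_rate_bound(1)[OF zero_in_Simplex] by simp

definition jump_bound :: real where
  "jump_bound = 2 * rate_bound * ((\<Sum>i\<in>UNIV. \<Sum>j\<in>UNIV - {i}. \<bar>lam (Some i) (Some j)\<bar>)
     + (\<Sum>i\<in>UNIV. \<bar>lam (Some i) None\<bar>) + (\<Sum>j\<in>UNIV. \<bar>lam None (Some j)\<bar>))"

lemma jump_bound_nonneg: "0 \<le> jump_bound"
  unfolding jump_bound_def using rate_bound_nonneg
  by (intro mult_nonneg_nonneg add_nonneg_nonneg sum_nonneg) auto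

lemma gam_unit_interval:
  "i \<noteq> j \<Longrightarrow> 0 \<le> gam (Some i) (Some j)" "i \<noteq> j \<Longrightarrow> gam (Some i) (Some j) \<le> 1"
  "0 \<le> gam (Some i) None" "gam (Some i) None \<le> 1"
  "0 \<le> gam None (Some j)" "gam None (Some j) \<le> 1"
  using gam_range[of "Some i" "Some j"] gam_range[of "Some i" None] gam_range[of None "Some j"] by auto

lemma Jop_abs_le:
  assumes y: "y \<in> Simplex" and M: "\<And>z. z \<in> Simplex \<Longrightarrow> \<bar>\<phi> z\<bar> \<le> M"
  shows "\<bar>J \<phi> y\<bar> \<le> jump_bound * M"
proof -
  have jump_term: "\<bar>l * c * (\<phi> z - \<phi> y)\<bar> \<le> 2 * rate_bound * \<bar>l\<bar> * M"
    if "\<bar>c\<bar> \<le> rate_bound" "z \<in> Simplex" for l c z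
  proof -
    have "\<bar>l * c * (\<phi> z - \<phi> y)\<bar> \<le> \<bar>l\<bar> * rate_bound * (2 * M)"
      unfolding abs_mult using that M[OF y] M[of z] by (intro mult_mono) auto
    then show ?thesis
      by (simp add: algebra_simps)
  qed
  have "\<bar>J \<phi> y\<bar> \<le> (\<Sum>i\<in>UNIV. \<Sum>j\<in>UNIV - {i}. 2 * rate_bound * \<bar>lam (Some i) (Some j)\<bar> * M)
     + (\<Sum>i\<in>UNIV. 2 * rate_bound * \<bar>lam (Some i) None\<bar> * M)
     + (\<Sum>j\<in>UNIV. 2 * rate_bound * \<bar>lam None (Some j)\<bar> * M)"
    unfolding Jop_def
    by (intro order_trans[OF abs_triangle_ineq] add_mono order_trans[OF sum_abs] sum_mono jump_term
        rate_le_rate_bound y Simplex_jump Simplex_jump_out Simplex_jump_in gam_unit_interval) auto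
  also have "\<dots> = jump_bound * M"
    unfolding jump_bound_def by (simp add: sum_distrib_left sum_distrib_right algebra_simps)
  finally show ?thesis .
qed

lemma continuous_on_flow_compose:
  assumes "continuous_on D p" "\<And>z. z \<in> D \<Longrightarrow> p z \<in> Simplex" "continuous_on D q"
  shows "continuous_on D (\<lambda>z. Y (p z) (q z))"
  using continuous_on_compose2[OF continuous_on_flow, of D "\<lambda>z. (p z, q z)"] assms
  by (auto intro: continuous_on_Pair)

lemma continuous_on_Jop:
  assumes h: "continuous_on (Simplex \<times> {0..}) h"
    and p: "continuous_on D p" "\<And>z. z \<in> D \<Longrightarrow> p z \<in> Simplex"
    and q: "continuous_on D q" "\<And>z. z \<in> D \<Longrightarrow> 0 \<le> q z"
  shows "continuous_on D (\<lambda>z. J (\<lambda>y. h (y, q z)) (p z))"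
proof -
  have H: "continuous_on D (\<lambda>z. h (a z, q z))"
    if "continuous_on D a" "\<And>z. z \<in> D \<Longrightarrow> a z \<in> Simplex" for a
    by (rule continuous_on_compose2[OF h]) (use that q in \<open>auto intro: continuous_on_Pair\<close>)
  have F: "continuous_on D (\<lambda>z. f i (p z))" "continuous_on D (\<lambda>z. f0 (p z))" for i
    using p by (auto intro: continuous_on_compose2[OF f_cont] continuous_on_compose2[OF f0_cont])
  have P: "continuous_on D (\<lambda>z. p z $ i)" "continuous_on D (\<lambda>z. coord0 (p z))" for i
    unfolding coord0_def by (intro continuous_intros p(1))+
  have "continuous_on D (\<lambda>z. lam (Some i) (Some j) * f i (p z) *
      (h (p z + (gam (Some i) (Some j) * p z $ i) *\<^sub>R (axis j 1 - axis i 1), q z) - h (p z, q z)))"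
    if "i \<noteq> j" for i j
    using p(2) that
    by (intro continuous_on_mult continuous_on_diff continuous_on_const F H p(1)
        continuous_on_add continuous_on_scaleR P) (auto intro: Simplex_jump gam_unit_interval)
  moreover have "continuous_on D (\<lambda>z. lam (Some i) None * f i (p z) *
      (h (p z - (gam (Some i) None * p z $ i) *\<^sub>R axis i 1, q z) - h (p z, q z)))" for i
    using p(2)
    by (intro continuous_on_mult continuous_on_diff continuous_on_const F H p(1)
        continuous_on_scaleR P) (auto intro: Simplex_jump_out gam_unit_interval)
  moreover have "continuous_on D (\<lambda>z. lam None (Some j) * f0 (p z) *
      (h (p z + (gam None (Some j) * coord0 (p z)) *\<^sub>R axis j 1, q z) - h (p z, q z)))" for j
    using p(2)
    by (intro continuous_on_mult continuous_on_diff continuous_on_const F H p(1)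
        continuous_on_add continuous_on_scaleR P) (auto intro: Simplex_jump_in gam_unit_interval)
  ultimately show ?thesis
    unfolding Jop_def by (intro continuous_on_add continuous_on_sum) auto
qed

definition duhamel :: "((real ^ 'n) \<times> real \<Rightarrow> real) \<Rightarrow> (real ^ 'n) \<times> real \<Rightarrow> real" where
  "duhamel h = (\<lambda>(x, t). integral {0..t} (\<lambda>s. J (\<lambda>y. h (y, s)) (Y x (s - t))))"

lemma Jop_along_flow_integrable:
  assumes h: "continuous_on (Simplex \<times> {0..}) h" and x: "x \<in> Simplex"
  shows "(\<lambda>s. J (\<lambda>y. h (y, s)) (Y x (s - t))) integrable_on {0..t}"
  using x Y_in[OF x]
  by (intro integrable_continuous_interval continuous_on_Jop[OF h] continuous_on_flow_compose)
    (auto intro!: continuous_intros)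

lemma continuous_on_duhamel:
  assumes h: "continuous_on (Simplex \<times> {0..}) h"
  shows "continuous_on (Simplex \<times> {0..}) (duhamel h)"
proof -
  have "continuous_on (Simplex \<times> {0..} \<times> {0..})
      (\<lambda>z. J (\<lambda>y. h (y, snd (snd z))) (Y (fst z) (snd (snd z) - fst (snd z))))"
    by (intro continuous_on_Jop[OF h] continuous_on_flow_compose) (auto intro!: continuous_intros Y_in)
  then show ?thesis
    unfolding duhamel_def by (intro continuous_on_integral_Icc0) (simp add: case_prod_beta)
qed

lemma duhamel_diff:
  assumes "continuous_on (Simplex \<times> {0..}) h" "continuous_on (Simplex \<times> {0..}) g" "x \<in> Simplex"
  shows "duhamel h (x, t) - duhamel g (x, t) = duhamel (\<lambda>z. h z - g z) (x, t)"
  unfolding duhamel_def using assms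
  by (simp add: integral_diff[symmetric] Jop_along_flow_integrable Jop_diff)

text \<open>The weight is chosen such that the Duhamel term halves exponentially weighted bounds.\<close>

definition weight_rate :: real where
  "weight_rate = 2 * jump_bound + 1"

lemma weight_rate_pos: "0 < weight_rate"
  using jump_bound_nonneg by (simp add: weight_rate_def)

lemma duhamel_abs_le:
  assumes h: "continuous_on (Simplex \<times> {0..}) h" and x: "x \<in> Simplex" and t: "0 \<le> t" and C: "0 \<le> C"
    and h_le: "\<And>y s. y \<in> Simplex \<Longrightarrow> s \<in> {0..t} \<Longrightarrow> \<bar>h (y, s)\<bar> \<le> C * exp (weight_rate * s)"
  shows "\<bar>duhamel h (x, t)\<bar> \<le> C / 2 * exp (weight_rate * t)"
proof -
  have "\<bar>duhamel h (x, t)\<bar> \<le> jump_bound * C / weight_rate * exp (weight_rate * t)"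
    unfolding duhamel_def case_prod_conv
  proof (rule integral_abs_le_exp[OF Jop_along_flow_integrable[OF h x] t weight_rate_pos])
    show "0 \<le> jump_bound * C"
      using jump_bound_nonneg C by simp
    fix s assume "s \<in> {0..t}"
    then have "\<bar>J (\<lambda>y. h (y, s)) (Y x (s - t))\<bar> \<le> jump_bound * (C * exp (weight_rate * s))"
      using h_le by (intro Jop_abs_le Y_in x)
    then show "\<bar>J (\<lambda>y. h (y, s)) (Y x (s - t))\<bar> \<le> jump_bound * C * exp (weight_rate * s)"
      by (simp add: mult.assoc)
  qed
  also have "jump_bound * C / weight_rate \<le> C / 2"
    using C weight_rate_pos by (simp add: weight_rate_def field_simps)
  finally show ?thesis
    by (simp add: mult_right_mono)
qed

text \<open>The maximum \<open>N\<close> of \<^term>\<open>\<bar>w (y, s)\<bar> * exp (- weight_rate * s)\<close> over \<open>\<Sigma> \<times> [0, t]\<close>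
  satisfies \<open>N \<le> N / 2\<close>.\<close>

lemma duhamel_fixpoint_eq_0:
  assumes w: "continuous_on (Simplex \<times> {0..}) w"
    and w_eq: "\<And>y s. y \<in> Simplex \<Longrightarrow> 0 \<le> s \<Longrightarrow> w (y, s) = duhamel w (y, s)"
    and x: "x \<in> Simplex" and t: "0 \<le> t"
  shows "w (x, t) = 0"
proof -
  define N where "N z = \<bar>w z\<bar> * exp (- weight_rate * snd z)" for z
  have "continuous_on (Simplex \<times> {0..t}) w"
    by (rule continuous_on_subset[OF w]) auto
  then have "continuous_on (Simplex \<times> {0..t}) N"
    unfolding N_def by (intro continuous_on_mult continuous_on_exp continuous_on_rabs
        continuous_on_const continuous_on_snd continuous_on_id)
  moreover have "(x, t) \<in> Simplex \<times> {0..t}"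
    using x t by simp
  ultimately obtain z0 where z0: "z0 \<in> Simplex \<times> {0..t}"
    and max: "\<And>z. z \<in> Simplex \<times> {0..t} \<Longrightarrow> N z \<le> N z0"
    using continuous_attains_sup[OF compact_Times[OF compact_Simplex compact_Icc]] by (metis empty_iff)
  then obtain y0 s0 where y0s0: "z0 = (y0, s0)" "y0 \<in> Simplex" "0 \<le> s0" "s0 \<le> t"
    by auto
  have N_exp: "N (y, s) * exp (weight_rate * s) = \<bar>w (y, s)\<bar>" for y s
    by (simp add: N_def mult.assoc exp_add[symmetric])
  have "\<bar>w (y, s)\<bar> \<le> N z0 * exp (weight_rate * s)" if "y \<in> Simplex" "s \<in> {0..s0}" for y s
  proof -
    have "N (y, s) \<le> N z0"
      using max that y0s0 by simp
    from mult_right_mono[OF this exp_ge_zero[of "weight_rate * s"]] show ?thesis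
      using N_exp[of y s] by linarith
  qed
  then have "\<bar>duhamel w (y0, s0)\<bar> \<le> N z0 / 2 * exp (weight_rate * s0)"
    using y0s0 by (intro duhamel_abs_le[OF w]) (auto simp: N_def)
  then have "N z0 * exp (weight_rate * s0) \<le> N z0 / 2 * exp (weight_rate * s0)"
    using N_exp[of y0 s0] w_eq[of y0 s0] y0s0 by simp
  then have "N z0 \<le> 0"
    by (simp add: mult_le_0_iff)
  then have "N (x, t) \<le> 0"
    using max[of "(x, t)"] x t by simp
  then show ?thesis
    by (simp add: N_def mult_le_0_iff)
qed

definition picard :: "'n \<Rightarrow> ((real ^ 'n) \<times> real \<Rightarrow> real) \<Rightarrow> (real ^ 'n) \<times> real \<Rightarrow> real" where
  "picard k h = (\<lambda>(x, t). Y x (- t) $ k + duhamel h (x, t))"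

lemma global_mild_solution_iff_picard:
  "global_mild_solution lam gam f0 f Y u \<longleftrightarrow> continuous_on (Simplex \<times> {0..}) u \<and>
     (\<forall>x\<in>Simplex. \<forall>t\<ge>0. \<forall>k. u (x, t) $ k = picard k (\<lambda>z. u z $ k) (x, t))"
  by (simp add: global_mild_solution_def picard_def duhamel_def)

lemma continuous_on_picard:
  assumes "continuous_on (Simplex \<times> {0..}) h"
  shows "continuous_on (Simplex \<times> {0..}) (picard k h)"
proof -
  have "continuous_on (Simplex \<times> {0..}) (\<lambda>z. Y (fst z) (- snd z))"
    by (intro continuous_on_flow_compose) (auto intro!: continuous_intros)
  then show ?thesis
    unfolding picard_def case_prod_beta prod.collapse
    by (intro continuous_on_add continuous_on_component continuous_on_duhamel[OF assms])
qed

text \<open>The Picard map is made a strict contraction on the space of bounded continuous functions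
  on the whole of \<open>(real ^ 'n) \<times> real\<close>: the unknown is weighted by
  \<^term>\<open>exp (- weight_rate * t)\<close> and the problem is pulled back along \<^const>\<open>domain_retraction\<close>.\<close>

definition unweight :: "(((real ^ 'n) \<times> real) \<Rightarrow>\<^sub>C real) \<Rightarrow> (real ^ 'n) \<times> real \<Rightarrow> real" where
  "unweight w z = exp (weight_rate * snd z) * apply_bcontfun w z"

definition weighted_picard :: "'n \<Rightarrow> (((real ^ 'n) \<times> real) \<Rightarrow>\<^sub>C real) \<Rightarrow> (real ^ 'n) \<times> real \<Rightarrow> real" where
  "weighted_picard k w z =
     exp (- weight_rate * snd (domain_retraction z)) * picard k (unweight w) (domain_retraction z)"

lemma continuous_on_unweight: "continuous_on A (unweight w)"
  unfolding unweight_def by (intro continuous_intros) auto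

lemma unweight_diff_abs_le: "\<bar>unweight a (y, s) - unweight b (y, s)\<bar> \<le> dist a b * exp (weight_rate * s)"
proof -
  have "\<bar>unweight a (y, s) - unweight b (y, s)\<bar>
      = \<bar>apply_bcontfun a (y, s) - apply_bcontfun b (y, s)\<bar> * exp (weight_rate * s)"
    by (simp add: unweight_def abs_mult left_diff_distrib[symmetric] mult.commute)
  also have "\<dots> \<le> dist a b * exp (weight_rate * s)"
    using dist_bounded[of a "(y, s)" b] by (intro mult_right_mono) (simp_all add: dist_real_def)
  finally show ?thesis .
qed

lemma weighted_picard_abs_le: "\<bar>weighted_picard k w z\<bar> \<le> 1 + norm w / 2"
proof -
  obtain x t where z: "domain_retraction z = (x, t)" and x: "x \<in> Simplex" and t: "0 \<le> t"
    using domain_retraction_in by (metis mem_Times_iff prod.collapse atLeast_iff)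
  have "\<bar>unweight w (y, s)\<bar> \<le> norm w * exp (weight_rate * s)" for y s
    using unweight_diff_abs_le[of w y s 0] by (simp add: unweight_def zero_bcontfun.rep_eq)
  then have "\<bar>duhamel (unweight w) (x, t)\<bar> \<le> norm w / 2 * exp (weight_rate * t)"
    using x t by (intro duhamel_abs_le continuous_on_unweight) auto
  moreover have "\<bar>Y x (- t) $ k\<bar> \<le> 1"
    using Simplex_nonneg[OF Y_in[OF x], of "- t" k] Simplex_component_le_1[OF Y_in[OF x], of "- t" k]
    by simp
  ultimately have "\<bar>picard k (unweight w) (x, t)\<bar> \<le> 1 + norm w / 2 * exp (weight_rate * t)"
    unfolding picard_def by simp
  then have "\<bar>weighted_picard k w z\<bar> \<le> exp (- weight_rate * t) * (1 + norm w / 2 * exp (weight_rate * t))"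
    unfolding weighted_picard_def z by (simp add: abs_mult mult_left_mono)
  also have "\<dots> = exp (- weight_rate * t) + norm w / 2"
    by (simp add: field_simps exp_minus)
  also have "exp (- weight_rate * t) \<le> 1"
    using t weight_rate_pos by simp
  finally show ?thesis
    by simp
qed

lemma weighted_picard_bcontfun: "weighted_picard k w \<in> bcontfun"
proof (rule bcontfun_normI[where b = "1 + norm w / 2"])
  have "range domain_retraction \<subseteq> Simplex \<times> {0..}"
    using domain_retraction_in by blast
  then have "continuous_on UNIV (picard k (unweight w) \<circ> domain_retraction)"
    by (intro continuous_on_compose continuous_on_domain_retraction
        continuous_on_subset[OF continuous_on_picard[OF continuous_on_unweight]])
  then show "continuous_on UNIV (weighted_picard k w)"
    unfolding weighted_picard_def o_def
    by (intro continuous_on_mult continuous_intros continuous_on_domain_retraction)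
qed (simp add: weighted_picard_abs_le)

lemma weighted_picard_dist_le: "\<bar>weighted_picard k a z - weighted_picard k b z\<bar> \<le> 1 / 2 * dist a b"
proof -
  obtain x t where z: "domain_retraction z = (x, t)" and x: "x \<in> Simplex" and t: "0 \<le> t"
    using domain_retraction_in by (metis mem_Times_iff prod.collapse atLeast_iff)
  have "weighted_picard k a z - weighted_picard k b z
      = exp (- weight_rate * t) * duhamel (\<lambda>z. unweight a z - unweight b z) (x, t)"
    unfolding weighted_picard_def z picard_def
    using duhamel_diff[OF continuous_on_unweight continuous_on_unweight x]
    by (simp add: right_diff_distrib[symmetric])
  moreover have "\<bar>duhamel (\<lambda>z. unweight a z - unweight b z) (x, t)\<bar> \<le> dist a b / 2 * exp (weight_rate * t)"
    using x t unweight_diff_abs_le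
    by (intro duhamel_abs_le continuous_on_diff continuous_on_unweight) auto
  ultimately have "\<bar>weighted_picard k a z - weighted_picard k b z\<bar>
      \<le> exp (- weight_rate * t) * (dist a b / 2 * exp (weight_rate * t))"
    by (simp add: abs_mult mult_left_mono)
  then show ?thesis
    by (simp add: mult.left_commute[of "exp _"] exp_add[symmetric])
qed

lemma picard_fixpoint_exists:
  "\<exists>U. continuous_on (Simplex \<times> {0..}) U \<and> (\<forall>z\<in>Simplex \<times> {0..}. U z = picard k U z)"
proof -
  have "\<exists>!w. Bcontfun (weighted_picard k w) = w"
  proof (rule banach_fix_type[of "1/2"])
    show "\<forall>a b. dist (Bcontfun (weighted_picard k a)) (Bcontfun (weighted_picard k b)) \<le> 1 / 2 * dist a b"
      using weighted_picard_dist_le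
      by (intro allI dist_bound) (simp add: Bcontfun_inverse[OF weighted_picard_bcontfun] dist_real_def)
  qed simp_all
  then obtain w where w: "weighted_picard k w = apply_bcontfun w"
    by (metis Bcontfun_inverse weighted_picard_bcontfun)
  have "unweight w z = picard k (unweight w) z" if "z \<in> Simplex \<times> {0..}" for z
    using fun_cong[OF w, of z] that
    by (auto simp: unweight_def weighted_picard_def domain_retraction_id exp_minus field_simps)
  then show ?thesis
    using continuous_on_unweight by blast
qed

lemma mild_solution_exists: "\<exists>u. global_mild_solution lam gam f0 f Y u"
proof -
  obtain U where "\<And>k. continuous_on (Simplex \<times> {0..}) (U k)"
    "\<And>k z. z \<in> Simplex \<times> {0..} \<Longrightarrow> U k z = picard k (U k) z"
    using picard_fixpoint_exists by metis
  then have "global_mild_solution lam gam f0 f Y (\<lambda>z. \<chi> k. U k z)"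
    unfolding global_mild_solution_iff_picard by (auto intro: continuous_on_vec_lambda)
  then show ?thesis
    by blast
qed

lemma mild_solution_unique:
  assumes u: "global_mild_solution lam gam f0 f Y u" and v: "global_mild_solution lam gam f0 f Y v"
    and x: "x \<in> Simplex" and t: "0 \<le> t"
  shows "v (x, t) = u (x, t)"
proof -
  have "v (x, t) $ k - u (x, t) $ k = 0" for k
  proof (rule duhamel_fixpoint_eq_0[OF _ _ x t])
    have uk: "continuous_on (Simplex \<times> {0..}) (\<lambda>z. u z $ k)"
      and vk: "continuous_on (Simplex \<times> {0..}) (\<lambda>z. v z $ k)"
      using u v by (auto simp: global_mild_solution_iff_picard intro: continuous_on_component)
    show "continuous_on (Simplex \<times> {0..}) (\<lambda>z. v z $ k - u z $ k)"
      by (rule continuous_on_diff[OF vk uk])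
    fix y :: "real ^ 'n" and s :: real assume "y \<in> Simplex" "0 \<le> s"
    then show "v (y, s) $ k - u (y, s) $ k = duhamel (\<lambda>z. v z $ k - u z $ k) (y, s)"
      using u v duhamel_diff[OF vk uk] by (simp add: global_mild_solution_iff_picard picard_def)
  qed
  then show ?thesis
    by (simp add: vec_eq_iff)
qed

end

theorem proposition3p5:
  fixes f0 :: "real ^ 'n::finite \<Rightarrow> real"
    and f :: "'n \<Rightarrow> real ^ 'n \<Rightarrow> real"
    and lam gam :: "'n option \<Rightarrow> 'n option \<Rightarrow> real"
    and Y :: "real ^ 'n \<Rightarrow> real \<Rightarrow> real ^ 'n"
  assumes f0_lip: "\<exists>L. L-lipschitz_on Simplex f0"
    and f_lip: "\<And>k. \<exists>L. L-lipschitz_on Simplex (f k)"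
    and f0_nonneg: "\<And>x. x \<in> Simplex \<Longrightarrow> 0 \<le> f0 x"
    and f_nonneg: "\<And>k x. x \<in> Simplex \<Longrightarrow> 0 \<le> f k x"
    and lam_pos: "\<And>i j. i \<noteq> j \<Longrightarrow> 0 < lam i j"
    and gam_range: "\<And>i j. i \<noteq> j \<Longrightarrow> 0 < gam i j \<and> gam i j \<le> 1"
    and Y_init: "\<And>x. x \<in> Simplex \<Longrightarrow> Y x 0 = x"
    and Y_in: "\<And>x t. x \<in> Simplex \<Longrightarrow> Y x t \<in> Simplex"
    and Y_ode: "\<And>x t. x \<in> Simplex \<Longrightarrow>
                  (Y x has_vector_derivative drift f0 f (Y x t)) (at t)"
  shows "\<exists>u. global_mild_solution lam gam f0 f Y u \<and>
           (\<forall>v. global_mild_solution lam gam f0 f Y v \<longrightarrow>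
                (\<forall>x\<in>Simplex. \<forall>t\<ge>0. v (x, t) = u (x, t)))"
proof -
  interpret mild_problem f0 f lam gam Y
    using f0_lip f_lip gam_range Y_init Y_in Y_ode by unfold_locales
  obtain u where "global_mild_solution lam gam f0 f Y u"
    using mild_solution_exists by blast
  then show ?thesis
    using mild_solution_unique by blast
qed

end
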